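(* Let $n\ge2$ and $A\in s(n)$. If there exists $i\in\{1,\dots,n\}$ such that all entries of the $i$-th column $Ae_i$ are strictly positive, then $A$ is divisible in $s(n)$.
   Context: $s(n)$ denotes the set of $n\times n$ column-stochastic matrices (non-negative real entries, each column summing to $1$), a monoid under matrix multiplication whose group of units is the set of permutation matrices. $A\in s(n)$ is indivisible if for every decomposition $A=BC$ with $B,C\in s(n)$ exactly one of $B,C$ is a permutation matrix, and divisible otherwise. $e_i$ is the $i$-th standard basis vector. *)

theory Defs
  imports "HOL-Analysis.Analysis"
begin

text \<open>Matrices over index type 'n (n = CARD('n)); entry A $ i $ j is row i, column j.\<close>

definition col_stochastic :: "real^'n^'n \<Rightarrow> bool" where
  "col_stochastic A \<longleftrightarrow> (\<forall>i j. 0 \<le> A $ i $ j) \<and> (\<forall>j. (\<Sum>i\<in>UNIV. A $ i $ j) = 1)"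

definition perm_matrix :: "real^'n^'n \<Rightarrow> bool" where
  "perm_matrix P \<longleftrightarrow> (\<exists>p. p permutes (UNIV :: 'n set) \<and>
      P = (\<chi> i j. if i = p j then 1 else 0))"

definition indivisible :: "real^'n^'n \<Rightarrow> bool" where
  "indivisible A \<longleftrightarrow> (\<forall>B C. col_stochastic B \<longrightarrow> col_stochastic C \<longrightarrow> A = B ** C \<longrightarrow>
      (perm_matrix B \<noteq> perm_matrix C))"

definition divisible_st :: "real^'n^'n \<Rightarrow> bool" where
  "divisible_st A \<longleftrightarrow> \<not> indivisible A"

end

theory Submission
  imports Defs
begin

text \<open>Fix a column \<open>j\<close> with all entries positive and another index \<open>l \<noteq> j\<close>. For small
  \<open>s > 0\<close> let \<open>C\<close> be the identity with column \<open>j\<close> replaced by \<open>(1 - s) e\<^sub>j + s e\<^sub>l\<close>, and let \<open>B\<close>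
  be \<open>A\<close> with column \<open>j\<close> replaced by \<open>(A e\<^sub>j - s A e\<^sub>l) / (1 - s)\<close>. Then \<open>A = B C\<close>, both
  factors are column-stochastic, \<open>C\<close> has the entry \<open>1 - s \<notin> {0, 1}\<close>, and column \<open>j\<close> of \<open>B\<close>
  stays strictly positive, which a permutation matrix of size at least 2 cannot have.\<close>

lemma exists_other_index:
  assumes "CARD('n::finite) \<ge> 2"
  shows "\<exists>i::'n. i \<noteq> x"
proof (rule ccontr)
  assume "\<not> ?thesis"
  then have "(UNIV :: 'n set) = {x}" by auto
  then have "CARD('n) = card {x}" by (rule arg_cong)
  with assms show False by simp
qed

lemma col_stochastic_entry_le_1:
  assumes "col_stochastic A"
  shows "A $ i $ k \<le> 1"
proof -
  have "A $ i $ k \<le> (\<Sum>r\<in>UNIV. A $ r $ k)"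
    using assms by (intro member_le_sum) (auto simp: col_stochastic_def)
  with assms show ?thesis by (simp add: col_stochastic_def)
qed

lemma perm_matrix_entry_0_or_1:
  assumes "perm_matrix P"
  shows "P $ i $ k = 0 \<or> P $ i $ k = 1"
  using assms by (auto simp: perm_matrix_def)

lemma perm_matrix_column_has_zero:
  assumes "CARD('n) \<ge> 2" and "perm_matrix (P :: real^'n^'n)"
  shows "\<exists>i. P $ i $ k = 0"
proof -
  obtain p where P: "P = (\<chi> i k. if i = p k then 1 else 0)"
    using assms(2) unfolding perm_matrix_def by blast
  obtain i where "i \<noteq> p k" using exists_other_index[OF assms(1)] by blast
  with P show ?thesis by auto
qed

definition mix_matrix :: "'n \<Rightarrow> 'n \<Rightarrow> real \<Rightarrow> real^'n^'n" where
  "mix_matrix j l s = (\<chi> i k. if k = j then (if i = j then 1 - s else if i = l then s else 0)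
                               else if i = k then 1 else 0)"

definition unmix_column :: "'n \<Rightarrow> 'n \<Rightarrow> real \<Rightarrow> real^'n^'n \<Rightarrow> real^'n^'n" where
  "unmix_column j l s A = (\<chi> i k. if k = j then (A $ i $ j - s * A $ i $ l) / (1 - s) else A $ i $ k)"

lemma col_stochastic_mix_matrix:
  assumes "j \<noteq> l" and "0 \<le> s" and "s \<le> 1"
  shows "col_stochastic (mix_matrix j l s)"
  unfolding col_stochastic_def
proof (intro conjI allI)
  fix i k show "0 \<le> mix_matrix j l s $ i $ k"
    using assms by (auto simp: mix_matrix_def)
next
  fix k
  show "(\<Sum>i\<in>UNIV. mix_matrix j l s $ i $ k) = 1"
  proof (cases "k = j")
    case True
    then have "(\<Sum>i\<in>UNIV. mix_matrix j l s $ i $ k)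
        = (\<Sum>i\<in>UNIV. (if i = j then 1 - s else 0) + (if i = l then s else 0))"
      using assms(1) by (intro sum.cong) (auto simp: mix_matrix_def)
    then show ?thesis by (simp add: sum.distrib)
  qed (simp add: mix_matrix_def)
qed

lemma not_perm_matrix_mix_matrix:
  assumes "0 < s" and "s < 1"
  shows "\<not> perm_matrix (mix_matrix j l s)"
  using perm_matrix_entry_0_or_1[of "mix_matrix j l s" j j] assms
  by (auto simp: mix_matrix_def)

lemma matrix_mult_mix_matrix:
  assumes "j \<noteq> l"
  shows "(B ** mix_matrix j l s) $ i $ k
           = (if k = j then (1 - s) * B $ i $ j + s * B $ i $ l else B $ i $ k)"
proof (cases "k = j")
  case True
  then have "(B ** mix_matrix j l s) $ i $ k
      = (\<Sum>r\<in>UNIV. (if r = j then B $ i $ j * (1 - s) else 0) + (if r = l then B $ i $ l * s else 0))"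
    using assms unfolding matrix_matrix_mult_def
    by (simp, intro sum.cong) (auto simp: mix_matrix_def)
  with True show ?thesis by (simp add: sum.distrib)
next
  case False
  then have "(B ** mix_matrix j l s) $ i $ k = (\<Sum>r\<in>UNIV. if r = k then B $ i $ k else 0)"
    unfolding matrix_matrix_mult_def vec_lambda_beta
    by (intro sum.cong) (auto simp: mix_matrix_def)
  with False show ?thesis by simp
qed

lemma unmix_column_mult_mix_matrix:
  assumes "j \<noteq> l" and "s \<noteq> 1"
  shows "unmix_column j l s A ** mix_matrix j l s = A"
  using assms by (simp add: vec_eq_iff matrix_mult_mix_matrix unmix_column_def)

lemma col_stochastic_unmix_column:
  assumes "col_stochastic A" and "j \<noteq> l" and "s < 1"
    and dominated: "\<And>i. s * A $ i $ l \<le> A $ i $ j"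
  shows "col_stochastic (unmix_column j l s A)"
  unfolding col_stochastic_def
proof (intro conjI allI)
  fix i k show "0 \<le> unmix_column j l s A $ i $ k"
    using assms dominated[of i] by (auto simp: unmix_column_def col_stochastic_def)
next
  fix k
  show "(\<Sum>i\<in>UNIV. unmix_column j l s A $ i $ k) = 1"
  proof (cases "k = j")
    case True
    then have "(\<Sum>i\<in>UNIV. unmix_column j l s A $ i $ k)
        = (\<Sum>i\<in>UNIV. A $ i $ j - s * A $ i $ l) / (1 - s)"
      by (simp add: unmix_column_def sum_divide_distrib)
    also have "\<dots> = ((\<Sum>i\<in>UNIV. A $ i $ j) - s * (\<Sum>i\<in>UNIV. A $ i $ l)) / (1 - s)"
      by (simp add: sum_subtractf sum_distrib_left)
    finally show ?thesis using assms(1,3) by (simp add: col_stochastic_def)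
  qed (use assms(1) in \<open>simp add: unmix_column_def col_stochastic_def\<close>)
qed

lemma divisible_st_if_column_dominates:
  fixes A :: "real^'n^'n"
  assumes "CARD('n) \<ge> 2" and "col_stochastic A" and "j \<noteq> l" and "0 < s" and "s < 1"
    and dominated: "\<And>i. s * A $ i $ l < A $ i $ j"
  shows "divisible_st A"
proof -
  let ?B = "unmix_column j l s A" and ?C = "mix_matrix j l s"
  have "col_stochastic ?B"
    using assms(2-5) dominated by (intro col_stochastic_unmix_column) (auto intro: less_imp_le)
  moreover have "col_stochastic ?C"
    using assms(3-5) by (intro col_stochastic_mix_matrix) auto
  moreover have "A = ?B ** ?C"
    using assms(3,5) by (intro unmix_column_mult_mix_matrix[symmetric]) auto
  moreover have "\<not> perm_matrix ?B"
  proof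
    assume "perm_matrix ?B"
    then obtain i where "?B $ i $ j = 0"
      using perm_matrix_column_has_zero[OF assms(1)] by blast
    with dominated[of i] assms(5) show False by (simp add: unmix_column_def)
  qed
  moreover have "\<not> perm_matrix ?C"
    using not_perm_matrix_mix_matrix assms(4,5) by blast
  ultimately show ?thesis
    unfolding divisible_st_def indivisible_def by blast
qed

theorem corollary1:
  fixes A :: "real^'n^'n"
  assumes "CARD('n) \<ge> 2"
    and "col_stochastic A"
    and "\<exists>j. \<forall>i. 0 < A $ i $ j"
  shows "divisible_st A"
proof -
  obtain j where pos: "\<And>i. 0 < A $ i $ j" using assms(3) by blast
  obtain l where "l \<noteq> j" using exists_other_index[OF assms(1)] by blast
  define m where "m = Min (range (\<lambda>i. A $ i $ j))"
  have "0 < m" unfolding m_def using pos by (subst Min_gr_iff) auto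
  have m_le: "m \<le> A $ i $ j" for i unfolding m_def by simp
  have "m \<le> 1" using m_le[of j] col_stochastic_entry_le_1[OF assms(2)] by (meson order_trans)
  have "m / 2 * A $ i $ l < A $ i $ j" for i
  proof -
    have "m / 2 * A $ i $ l \<le> m / 2"
      using col_stochastic_entry_le_1[OF assms(2)] \<open>0 < m\<close> by (simp add: mult_left_le)
    also have "\<dots> < A $ i $ j" using \<open>0 < m\<close> m_le[of i] by simp
    finally show ?thesis .
  qed
  with \<open>l \<noteq> j\<close> \<open>0 < m\<close> \<open>m \<le> 1\<close> show ?thesis
    by (intro divisible_st_if_column_dominates[OF assms(1,2), of j l "m / 2"]) auto
qed

end
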